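(* In the 2SDI setting where Alice measures the qubit observables $A_0=\sigma_x$, $A_1=\sigma_y$ and Bob and Charlie are black boxes, the Svetlichny family $P^V_{SvF}$ demonstrates tripartite steering (i.e. admits no 2SDI fully LHS-LHV model) whenever $V>\frac12$.
   Context: Outcomes and settings: $a,b,c,x,y,z\in\{0,1\}$. For a qubit observable $O$ with eigenvalues $\pm1$, the measurement has projectors $M_0=(\mathbb 1+O)/2$, $M_1=(\mathbb 1-O)/2$; $M^A_{a|x}$ denotes the projectors of $A_x$. Svetlichny family ($0<V\le1$): $P^V_{SvF}(abc|xyz)=\frac{2+(-1)^{a\oplus b\oplus c\oplus xy\oplus yz\oplus xz}\sqrt2\,V}{16}$. 2SDI fully LHS-LHV model: there exist probabilities $q_\lambda$, qubit states $\rho^\lambda_A$ and arbitrary conditional distributions $P_\lambda(b|y)$, $P_\lambda(c|z)$ with $P(abc|xyz)=\sum_\lambda q_\lambda \mathrm{Tr}(M^A_{a|x}\rho^\lambda_A)P_\lambda(b|y)P_\lambda(c|z)$ for all $a,b,c,x,y,z$. A correlation demonstrates tripartite steering in the 2SDI scenario iff it admits no such model. *)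

theory Defs
  imports Complex_Main
begin

text \<open>2x2 complex matrices, indices 0 and 1 (entries outside are irrelevant).\<close>
type_synonym cmat = "nat \<Rightarrow> nat \<Rightarrow> complex"

definition mtrace :: "cmat \<Rightarrow> complex" where
  "mtrace M = (\<Sum>i<2. M i i)"

definition mmult :: "cmat \<Rightarrow> cmat \<Rightarrow> cmat" where
  "mmult A B = (\<lambda>i j. \<Sum>k<2. A i k * B k j)"

definition ident2 :: cmat where
  "ident2 = (\<lambda>i j. if i = j then 1 else 0)"

definition sigma_x :: cmat where
  "sigma_x = (\<lambda>i j. if (i = 0 \<and> j = 1) \<or> (i = 1 \<and> j = 0) then 1 else 0)"

definition sigma_y :: cmat where
  "sigma_y = (\<lambda>i j. if i = 0 \<and> j = 1 then - \<i> else if i = 1 \<and> j = 0 then \<i> else 0)"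

definition qubit_state :: "cmat \<Rightarrow> bool" where
  "qubit_state \<rho> \<longleftrightarrow>
     (\<forall>i<2. \<forall>j<2. \<rho> j i = cnj (\<rho> i j)) \<and>
     (\<forall>v :: nat \<Rightarrow> complex. 0 \<le> Re (\<Sum>i<2. \<Sum>j<2. cnj (v i) * \<rho> i j * v j)) \<and>
     mtrace \<rho> = 1"

definition proj :: "cmat \<Rightarrow> nat \<Rightarrow> cmat" where
  "proj Obs a = (\<lambda>i j. (ident2 i j + (-1) ^ a * Obs i j) / 2)"

definition alice_obs :: "nat \<Rightarrow> cmat" where
  "alice_obs x = (if x = 0 then sigma_x else sigma_y)"

definition P_SvF :: "real \<Rightarrow> nat \<Rightarrow> nat \<Rightarrow> nat \<Rightarrow> nat \<Rightarrow> nat \<Rightarrow> nat \<Rightarrow> real" where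
  "P_SvF V a b c x y z =
     (2 + (-1) ^ (a + b + c + x*y + y*z + x*z) * sqrt 2 * V) / 16"

abbreviation bits :: "nat set" where "bits \<equiv> {0, 1}"

definition cond_distr :: "(nat \<Rightarrow> nat \<Rightarrow> real) \<Rightarrow> bool" where
  "cond_distr D \<longleftrightarrow> (\<forall>b\<in>bits. \<forall>y\<in>bits. 0 \<le> D b y) \<and> (\<forall>y\<in>bits. (\<Sum>b\<in>bits. D b y) = 1)"

definition fully_LHS_LHV_2SDI ::
  "(nat \<Rightarrow> cmat) \<Rightarrow> (nat \<Rightarrow> nat \<Rightarrow> nat \<Rightarrow> nat \<Rightarrow> nat \<Rightarrow> nat \<Rightarrow> real) \<Rightarrow> bool" where
  "fully_LHS_LHV_2SDI A P \<longleftrightarrow>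
    (\<exists>(L :: nat set) (q :: nat \<Rightarrow> real) (\<rho> :: nat \<Rightarrow> cmat)
        (PB :: nat \<Rightarrow> nat \<Rightarrow> nat \<Rightarrow> real) (PC :: nat \<Rightarrow> nat \<Rightarrow> nat \<Rightarrow> real).
       finite L \<and> (\<forall>l\<in>L. 0 \<le> q l) \<and> (\<Sum>l\<in>L. q l) = 1 \<and>
       (\<forall>l\<in>L. qubit_state (\<rho> l) \<and> cond_distr (PB l) \<and> cond_distr (PC l)) \<and>
       (\<forall>a\<in>bits. \<forall>b\<in>bits. \<forall>c\<in>bits. \<forall>x\<in>bits. \<forall>y\<in>bits. \<forall>z\<in>bits.
          P a b c x y z =
          (\<Sum>l\<in>L. q l * Re (mtrace (mmult (proj (A x) a) (\<rho> l))) * PB l b y * PC l c z)))"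

end

theory Submission
  imports Defs
begin

text \<open>
  Evaluate the Svetlichny functional
  \<open>S(P) = \<Sum> (-1)^(a+b+c+xy+yz+xz) P(abc|xyz)\<close>.  It is linear, and the Svetlichny family
  attains \<open>S = 4\<surd>2 V\<close>.  For a single hidden variable of a 2SDI model, \<open>S\<close> factorises into
  Alice's correlators \<open>t\<^sub>x = Tr(A\<^sub>x \<rho>)\<close> and the correlators \<open>\<beta>\<^sub>y, \<gamma>\<^sub>z \<in> [-1,1]\<close> of Bob and Charlie:
  \<open>S = (t\<^sub>0+t\<^sub>1)(\<beta>\<^sub>0\<gamma>\<^sub>0-\<beta>\<^sub>1\<gamma>\<^sub>1) + (t\<^sub>0-t\<^sub>1)(\<beta>\<^sub>0\<gamma>\<^sub>1+\<beta>\<^sub>1\<gamma>\<^sub>0)\<close>.  Positivity of \<open>\<rho>\<close> gives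
  \<open>|t\<^sub>0 \<plusminus> t\<^sub>1| \<le> \<surd>2\<close>, and the two products of \<open>\<beta>\<close>'s and \<open>\<gamma>\<close>'s have absolute values summing to
  at most 2, so every model has \<open>S \<le> 2\<surd>2\<close>, which forces \<open>V \<le> 1/2\<close>.
\<close>

definition svetlichny_value :: "(nat \<Rightarrow> nat \<Rightarrow> nat \<Rightarrow> nat \<Rightarrow> nat \<Rightarrow> nat \<Rightarrow> real) \<Rightarrow> real" where
  "svetlichny_value P = (\<Sum>a\<in>bits. \<Sum>b\<in>bits. \<Sum>c\<in>bits. \<Sum>x\<in>bits. \<Sum>y\<in>bits. \<Sum>z\<in>bits.
      (-1) ^ (a + b + c + x*y + y*z + x*z) * P a b c x y z)"

lemma svetlichny_value_cong:
  assumes "\<And>a b c x y z. \<lbrakk>a \<in> bits; b \<in> bits; c \<in> bits; x \<in> bits; y \<in> bits; z \<in> bits\<rbrakk>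
             \<Longrightarrow> P a b c x y z = Q a b c x y z"
  shows "svetlichny_value P = svetlichny_value Q"
  unfolding svetlichny_value_def by (intro sum.cong refl) (simp add: assms)

lemma svetlichny_value_sum:
  "svetlichny_value (\<lambda>a b c x y z. \<Sum>l\<in>L. P l a b c x y z) = (\<Sum>l\<in>L. svetlichny_value (P l))"
  unfolding svetlichny_value_def sum_distrib_left by (simp only: sum.swap[where B = L])

lemma svetlichny_value_P_SvF: "svetlichny_value (P_SvF V) = 4 * sqrt 2 * V"
  unfolding svetlichny_value_def P_SvF_def by (simp add: field_simps)

lemma svetlichny_sign_sum:
  fixes \<alpha> \<beta> \<gamma> :: "nat \<Rightarrow> real"
  shows "(\<Sum>x\<in>bits. \<Sum>y\<in>bits. \<Sum>z\<in>bits. (-1) ^ (x*y + y*z + x*z) * \<alpha> x * \<beta> y * \<gamma> z)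
           = (\<alpha> 0 + \<alpha> 1) * (\<beta> 0 * \<gamma> 0 - \<beta> 1 * \<gamma> 1) + (\<alpha> 0 - \<alpha> 1) * (\<beta> 0 * \<gamma> 1 + \<beta> 1 * \<gamma> 0)"
  by (simp add: algebra_simps)

lemma svetlichny_value_product:
  fixes A B C :: "nat \<Rightarrow> nat \<Rightarrow> real"
  defines "\<alpha> \<equiv> \<lambda>x. A 0 x - A 1 x" and "\<beta> \<equiv> \<lambda>y. B 0 y - B 1 y" and "\<gamma> \<equiv> \<lambda>z. C 0 z - C 1 z"
  shows "svetlichny_value (\<lambda>a b c x y z. k * A a x * B b y * C c z)
           = k * ((\<alpha> 0 + \<alpha> 1) * (\<beta> 0 * \<gamma> 0 - \<beta> 1 * \<gamma> 1) + (\<alpha> 0 - \<alpha> 1) * (\<beta> 0 * \<gamma> 1 + \<beta> 1 * \<gamma> 0))"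
proof -
  have "svetlichny_value (\<lambda>a b c x y z. k * A a x * B b y * C c z)
          = k * (\<Sum>x\<in>bits. \<Sum>y\<in>bits. \<Sum>z\<in>bits. (-1) ^ (x*y + y*z + x*z) * \<alpha> x * \<beta> y * \<gamma> z)"
    unfolding svetlichny_value_def \<alpha>_def \<beta>_def \<gamma>_def by (simp add: algebra_simps)
  then show ?thesis
    by (simp only: svetlichny_sign_sum)
qed

text \<open>The real expectation values \<open>Tr(\<sigma>\<^sub>x \<rho>)\<close> and \<open>Tr(\<sigma>\<^sub>y \<rho>)\<close>, written in terms of the
  off-diagonal entries of \<open>\<rho>\<close>.\<close>

definition bloch_component :: "cmat \<Rightarrow> nat \<Rightarrow> real" where
  "bloch_component \<rho> x = (if x = 0 then Re (\<rho> 1 0 + \<rho> 0 1) else Im (\<rho> 1 0) - Im (\<rho> 0 1))"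

lemma alice_outcome_difference:
  assumes "x \<in> bits"
  shows "Re (mtrace (mmult (proj (alice_obs x) 0) \<rho>)) - Re (mtrace (mmult (proj (alice_obs x) 1) \<rho>))
           = bloch_component \<rho> x"
  using assms
  by (auto simp: mtrace_def mmult_def proj_def alice_obs_def sigma_x_def sigma_y_def ident2_def
      bloch_component_def numeral_2_eq_2 lessThan_Suc)

lemma qubit_state_bloch_halfplane:
  assumes "qubit_state \<rho>" and "c\<^sup>2 + s\<^sup>2 = 1"
  shows "0 \<le> 1 + bloch_component \<rho> 0 * c + bloch_component \<rho> 1 * s"
proof -
  have herm: "\<forall>i<2. \<forall>j<2. \<rho> j i = cnj (\<rho> i j)"
    and psd: "\<forall>v :: nat \<Rightarrow> complex. 0 \<le> Re (\<Sum>i<2. \<Sum>j<2. cnj (v i) * \<rho> i j * v j)"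
    and trace_one: "mtrace \<rho> = 1"
    using assms(1) unfolding qubit_state_def by blast+
  from trace_one have "\<rho> 0 0 + \<rho> 1 1 = 1"
    by (simp add: mtrace_def numeral_2_eq_2)
  then have trace: "Re (\<rho> 0 0) + Re (\<rho> 1 1) = 1"
    by (metis one_complex.sel(1) plus_complex.sel(1))
  have off_diag: "\<rho> 1 0 = cnj (\<rho> 0 1)" "\<rho> (Suc 0) 0 = cnj (\<rho> 0 (Suc 0))"
    using herm[rule_format, of 0 1] by simp_all
  define v :: "nat \<Rightarrow> complex" where "v = (\<lambda>i. if i = 0 then 1 else Complex c s)"
  have "Re (\<Sum>i<2. \<Sum>j<2. cnj (v i) * \<rho> i j * v j)
          = Re (\<rho> 0 0 + \<rho> 0 1 * Complex c s + cnj (Complex c s) * \<rho> 1 0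
                + cnj (Complex c s) * \<rho> 1 1 * Complex c s)"
    by (simp add: v_def numeral_2_eq_2)
  also have "\<dots> = Re (\<rho> 0 0) + Re (\<rho> 1 1) * (c\<^sup>2 + s\<^sup>2) + 2 * (Re (\<rho> 0 1) * c - Im (\<rho> 0 1) * s)"
    by (simp add: off_diag power2_eq_square algebra_simps)
  also have "\<dots> = 1 + 2 * (Re (\<rho> 0 1) * c - Im (\<rho> 0 1) * s)"
    using trace assms(2) by simp
  also have "\<dots> = 1 + bloch_component \<rho> 0 * c + bloch_component \<rho> 1 * s"
    using off_diag by (simp add: bloch_component_def algebra_simps)
  finally show ?thesis
    using psd[rule_format, of v] by linarith
qed

lemma qubit_state_bloch_diagonal_bounds:
  assumes "qubit_state \<rho>"
  shows "\<bar>bloch_component \<rho> 0 + bloch_component \<rho> 1\<bar> \<le> sqrt 2"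
    and "\<bar>bloch_component \<rho> 0 - bloch_component \<rho> 1\<bar> \<le> sqrt 2"
proof -
  define h :: real where "h = sqrt 2 / 2"
  have unit: "h\<^sup>2 + h\<^sup>2 = 1" "(-h)\<^sup>2 + (-h)\<^sup>2 = 1" "h\<^sup>2 + (-h)\<^sup>2 = 1" "(-h)\<^sup>2 + h\<^sup>2 = 1"
    by (simp_all add: h_def power_divide)
  have scale: "- sqrt 2 \<le> t" if "0 \<le> 1 + t * h" for t
  proof -
    have "0 \<le> sqrt 2 * (1 + t * h)"
      using that by simp
    also have "\<dots> = sqrt 2 + t"
      by (simp add: h_def ring_distribs)
    finally show ?thesis by simp
  qed
  note half = qubit_state_bloch_halfplane[OF assms]
  let ?t0 = "bloch_component \<rho> 0" and ?t1 = "bloch_component \<rho> 1"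
  have "- sqrt 2 \<le> ?t0 + ?t1" "- sqrt 2 \<le> - (?t0 + ?t1)"
       "- sqrt 2 \<le> ?t0 - ?t1" "- sqrt 2 \<le> - (?t0 - ?t1)"
    using half[OF unit(1)] half[OF unit(2)] half[OF unit(3)] half[OF unit(4)]
    by (intro scale; simp add: algebra_simps)+
  then show "\<bar>?t0 + ?t1\<bar> \<le> sqrt 2" "\<bar>?t0 - ?t1\<bar> \<le> sqrt 2"
    by linarith+
qed

lemma cond_distr_correlator_bound:
  assumes "cond_distr D" and "y \<in> bits"
  shows "\<bar>D 0 y - D 1 y\<bar> \<le> 1"
  using assms unfolding cond_distr_def by auto

lemma mult_le_of_abs_le:
  fixes b c u :: real
  assumes "\<bar>b\<bar> \<le> c"
  shows "b * u \<le> c * \<bar>u\<bar>"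
proof -
  have "b * u \<le> \<bar>b\<bar> * \<bar>u\<bar>"
    by (metis abs_ge_self abs_mult)
  also have "\<dots> \<le> c * \<bar>u\<bar>"
    using assms by (rule mult_right_mono) simp
  finally show ?thesis .
qed

lemma chsh_pair_bound:
  fixes b0 b1 g0 g1 :: real
  assumes "\<bar>b0\<bar> \<le> 1" "\<bar>b1\<bar> \<le> 1" "\<bar>g0\<bar> \<le> 1" "\<bar>g1\<bar> \<le> 1"
  shows "\<bar>b0 * g0 - b1 * g1\<bar> + \<bar>b0 * g1 + b1 * g0\<bar> \<le> 2"
proof -
  define P Q where "P = b0 * g0 - b1 * g1" and "Q = b0 * g1 + b1 * g0"
  have signed: "\<sigma> * P + \<tau> * Q \<le> 2" if "\<sigma> \<in> {-1, 1}" "\<tau> \<in> {-1, 1}" for \<sigma> \<tau> :: real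
  proof -
    have "\<sigma> * P + \<tau> * Q = b0 * (\<sigma> * g0 + \<tau> * g1) + b1 * (\<tau> * g0 - \<sigma> * g1)"
      by (simp add: P_def Q_def algebra_simps)
    also have "\<dots> \<le> \<bar>\<sigma> * g0 + \<tau> * g1\<bar> + \<bar>\<tau> * g0 - \<sigma> * g1\<bar>"
      using mult_le_of_abs_le[OF assms(1), of "\<sigma> * g0 + \<tau> * g1"]
        mult_le_of_abs_le[OF assms(2), of "\<tau> * g0 - \<sigma> * g1"]
      by simp
    also have "\<dots> \<le> 2"
      using that assms(3,4) by (elim insertE emptyE; simp; arith)
    finally show ?thesis .
  qed
  have "P + Q \<le> 2" "P - Q \<le> 2" "- P + Q \<le> 2" "- P - Q \<le> 2"
    using signed[of 1 1] signed[of 1 "-1"] signed[of "-1" 1] signed[of "-1" "-1"] by simp_all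
  then have "\<bar>P\<bar> + \<bar>Q\<bar> \<le> 2"
    by arith
  then show ?thesis
    by (simp only: P_def Q_def)
qed

lemma svetlichny_correlator_bound:
  fixes t0 t1 b0 b1 g0 g1 :: real
  assumes "\<bar>t0 + t1\<bar> \<le> sqrt 2" "\<bar>t0 - t1\<bar> \<le> sqrt 2"
    and "\<bar>b0\<bar> \<le> 1" "\<bar>b1\<bar> \<le> 1" "\<bar>g0\<bar> \<le> 1" "\<bar>g1\<bar> \<le> 1"
  shows "(t0 + t1) * (b0 * g0 - b1 * g1) + (t0 - t1) * (b0 * g1 + b1 * g0) \<le> 2 * sqrt 2"
proof -
  have "(t0 + t1) * (b0 * g0 - b1 * g1) + (t0 - t1) * (b0 * g1 + b1 * g0)
          \<le> sqrt 2 * (\<bar>b0 * g0 - b1 * g1\<bar> + \<bar>b0 * g1 + b1 * g0\<bar>)"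
    using mult_le_of_abs_le[OF assms(1), of "b0 * g0 - b1 * g1"]
      mult_le_of_abs_le[OF assms(2), of "b0 * g1 + b1 * g0"]
    by (simp only: distrib_left add_mono)
  also have "\<dots> \<le> sqrt 2 * 2"
    using chsh_pair_bound[OF assms(3-6)] by (rule mult_left_mono) simp
  finally show ?thesis
    by simp
qed

lemma svetlichny_value_hidden_variable_le:
  assumes "qubit_state \<rho>" "cond_distr B" "cond_distr C" "0 \<le> k"
  shows "svetlichny_value
           (\<lambda>a b c x y z. k * Re (mtrace (mmult (proj (alice_obs x) a) \<rho>)) * B b y * C c z)
         \<le> k * (2 * sqrt 2)"
proof -
  have alice_0: "Re (mtrace (mmult (proj (alice_obs 0) 0) \<rho>)) - Re (mtrace (mmult (proj (alice_obs 0) 1) \<rho>))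
                   = bloch_component \<rho> 0"
    and alice_1: "Re (mtrace (mmult (proj (alice_obs 1) 0) \<rho>)) - Re (mtrace (mmult (proj (alice_obs 1) 1) \<rho>))
                   = bloch_component \<rho> 1"
    by (rule alice_outcome_difference; simp)+
  show ?thesis
    unfolding svetlichny_value_product alice_0 alice_1
    by (intro mult_left_mono svetlichny_correlator_bound qubit_state_bloch_diagonal_bounds
        cond_distr_correlator_bound assms) auto
qed

theorem proposition4:
  fixes V :: real
  assumes "0 < V" and "V \<le> 1" and "V > 1/2"
  shows "\<not> fully_LHS_LHV_2SDI alice_obs (P_SvF V)"
proof
  assume "fully_LHS_LHV_2SDI alice_obs (P_SvF V)"
  then obtain L :: "nat set" and q \<rho> PB PC where q_nonneg: "\<forall>l\<in>L. 0 \<le> q l"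
    and q_sum: "(\<Sum>l\<in>L. q l) = 1"
    and local: "\<forall>l\<in>L. qubit_state (\<rho> l) \<and> cond_distr (PB l) \<and> cond_distr (PC l)"
    and model: "\<forall>a\<in>bits. \<forall>b\<in>bits. \<forall>c\<in>bits. \<forall>x\<in>bits. \<forall>y\<in>bits. \<forall>z\<in>bits.
          P_SvF V a b c x y z =
          (\<Sum>l\<in>L. q l * Re (mtrace (mmult (proj (alice_obs x) a) (\<rho> l))) * PB l b y * PC l c z)"
    unfolding fully_LHS_LHV_2SDI_def by blast
  have "4 * sqrt 2 * V = svetlichny_value (P_SvF V)"
    by (simp add: svetlichny_value_P_SvF)
  also have "\<dots> = svetlichny_value (\<lambda>a b c x y z. \<Sum>l\<in>L.
                q l * Re (mtrace (mmult (proj (alice_obs x) a) (\<rho> l))) * PB l b y * PC l c z)"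
    using model by (intro svetlichny_value_cong) blast
  also have "\<dots> \<le> (\<Sum>l\<in>L. q l * (2 * sqrt 2))"
    unfolding svetlichny_value_sum
    using local q_nonneg by (intro sum_mono svetlichny_value_hidden_variable_le) auto
  also have "\<dots> = 2 * sqrt 2"
    by (simp flip: sum_distrib_right add: q_sum)
  finally have "sqrt 2 * (2 * V) \<le> sqrt 2 * 1"
    by (simp add: algebra_simps)
  then show False
    using assms(3) by (simp add: mult_le_cancel_left)
qed

end
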